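(* For a topological space $X$, the following statements are equivalent: (1) $X$ is a uniformizable Alexandroff space; (2) $\{V(a):a\in X\}$ is a partition of $X$ into open subsets of $X$; (3) there exists a partition $\mathcal P$ of $X$ such that $\mathcal F_{\mathcal P}:=\{\alpha\subseteq X\times X:\bigcup\{D\times D:D\in\mathcal P\}\subseteq\alpha\}$ is a uniform structure compatible with the topology of $X$; (4) $X$ is an Alexandroff space and for all $a\in X$ and all $b\in V(a)$ we have $V(b)=V(a)$; (5) $X$ is an Alexandroff space and the relation $\{(a,b)\in X\times X: V(b)\subseteq V(a)\}$ is an equivalence relation on $X$; (6) the quotient space $X/\Re$ is discrete, where $\Re:=\{(a,b)\in X\times X:V(b)=V(a)\}$ and $X/\Re$ carries the quotient topology with respect to the natural map $\pi:X\to X/\Re$, $\pi(x)=$ the $\Re$-class of $x$.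
   Context: For a topological space $X$ and $a\in X$, $V(a):=\bigcap\{U: U\text{ open}, a\in U\}$. $X$ is an Alexandroff space if $V(a)$ is open for every $a\in X$. A uniform structure $\mathcal F$ on $X$ is a nonempty family of subsets of $X\times X$ such that for each $\alpha\in\mathcal F$: $\Delta_X\subseteq\alpha$; supersets of $\alpha$ in $X\times X$ belong to $\mathcal F$; $\alpha\cap\beta\in\mathcal F$ for $\beta\in\mathcal F$; $\alpha^{-1}\in\mathcal F$; some $\beta\in\mathcal F$ satisfies $\beta\circ\beta\subseteq\alpha$. It induces the topology $\tau_{\mathcal F}=\{U\subseteq X:\forall x\in U\ \exists \alpha\in\mathcal F\ \alpha[x]\subseteq U\}$ with $\alpha[x]=\{y:(x,y)\in\alpha\}$. $\mathcal F$ is compatible with the topology of $X$ if $\tau_{\mathcal F}$ equals that topology; $X$ is uniformizable if some compatible uniform structure exists. *)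

theory Defs
  imports "HOL-Analysis.Analysis" "HOL-Library.Disjoint_Sets"
begin

definition Vset :: "'a topology \<Rightarrow> 'a \<Rightarrow> 'a set" where
  "Vset T a = \<Inter>{U. openin T U \<and> a \<in> U}"

definition alexandroff :: "'a topology \<Rightarrow> bool" where
  "alexandroff T \<longleftrightarrow> (\<forall>a\<in>topspace T. openin T (Vset T a))"

definition uniform_structure :: "'a set \<Rightarrow> ('a \<times> 'a) set set \<Rightarrow> bool" where
  "uniform_structure X F \<longleftrightarrow>
     F \<noteq> {} \<and> F \<subseteq> Pow (X \<times> X) \<and>
     (\<forall>\<alpha>\<in>F.
        Id_on X \<subseteq> \<alpha> \<and>
        (\<forall>\<beta>. \<alpha> \<subseteq> \<beta> \<and> \<beta> \<subseteq> X \<times> X \<longrightarrow> \<beta> \<in> F) \<and>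
        (\<forall>\<beta>\<in>F. \<alpha> \<inter> \<beta> \<in> F) \<and>
        converse \<alpha> \<in> F \<and>
        (\<exists>\<beta>\<in>F. \<beta> O \<beta> \<subseteq> \<alpha>))"

definition uniform_opens :: "'a set \<Rightarrow> ('a \<times> 'a) set set \<Rightarrow> 'a set set" where
  "uniform_opens X F = {U. U \<subseteq> X \<and> (\<forall>x\<in>U. \<exists>\<alpha>\<in>F. \<alpha> `` {x} \<subseteq> U)}"

definition compatible_uniformity :: "'a topology \<Rightarrow> ('a \<times> 'a) set set \<Rightarrow> bool" where
  "compatible_uniformity T F \<longleftrightarrow> uniform_opens (topspace T) F = {U. openin T U}"

definition uniformizable :: "'a topology \<Rightarrow> bool" where
  "uniformizable T \<longleftrightarrow>
     (\<exists>F. uniform_structure (topspace T) F \<and> compatible_uniformity T F)"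

definition partition_uniformity :: "'a set \<Rightarrow> 'a set set \<Rightarrow> ('a \<times> 'a) set set" where
  "partition_uniformity X P = {\<alpha>. \<alpha> \<subseteq> X \<times> X \<and> (\<Union>D\<in>P. D \<times> D) \<subseteq> \<alpha>}"

definition quotient_topology :: "'a topology \<Rightarrow> ('a \<times> 'a) set \<Rightarrow> 'a set topology" where
  "quotient_topology T R =
     topology (\<lambda>S. S \<subseteq> topspace T // R \<and> openin T {x \<in> topspace T. R `` {x} \<in> S})"

end

theory Submission
  imports Defs
begin

text \<open>
  Every open set containing \<open>a\<close> contains \<open>V(a)\<close>, so \<open>b \<in> V(a)\<close> always gives
  \<open>V(b) \<subseteq> V(a)\<close>. All six conditions say that \<open>X\<close> is Alexandroff and that this
  specialization relation is symmetric (the R0 axiom). For a compatible uniformity the symmetry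
  holds because the uniform interior of \<open>\<alpha>\<inverse>[a]\<close> is an open set containing \<open>a\<close>.
  Conversely, when the sets \<open>V(a)\<close> are open and partition \<open>X\<close>, the open sets are exactly
  the unions of blocks, which is the topology induced by \<open>\<F>\<^sub>P\<close> for \<open>P = {V(a)}\<close>. Finally
  \<open>X/\<Re>\<close> is discrete iff every \<open>\<Re>\<close>-class is open, and under that condition the
  class of \<open>a\<close> is \<open>V(a)\<close>.
\<close>

lemma Vset_subset_topspace: "a \<in> topspace T \<Longrightarrow> Vset T a \<subseteq> topspace T"
  unfolding Vset_def by auto

lemma mem_Vset_self: "a \<in> topspace T \<Longrightarrow> a \<in> Vset T a"
  unfolding Vset_def by auto

lemma Vset_subset_openin: "openin T U \<Longrightarrow> a \<in> U \<Longrightarrow> Vset T a \<subseteq> U"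
  unfolding Vset_def by auto

lemma mem_VsetI: "(\<And>U. openin T U \<Longrightarrow> a \<in> U \<Longrightarrow> b \<in> U) \<Longrightarrow> b \<in> Vset T a"
  unfolding Vset_def by auto

lemma Vset_subset_Vset: "b \<in> Vset T a \<Longrightarrow> Vset T b \<subseteq> Vset T a"
  unfolding Vset_def by (intro Inter_anti_mono) auto

lemma mem_Vset_iff_Vset_subset: "b \<in> topspace T \<Longrightarrow> b \<in> Vset T a \<longleftrightarrow> Vset T b \<subseteq> Vset T a"
  using Vset_subset_Vset mem_Vset_self by (metis subsetD)

text \<open>Since \<open>b \<in> V(a)\<close> iff \<open>a \<in> closure {b}\<close>, this is the R0 (symmetric) separation axiom.\<close>

definition R0_space :: "'a topology \<Rightarrow> bool" where
  "R0_space T \<longleftrightarrow> (\<forall>a\<in>topspace T. \<forall>b\<in>Vset T a. a \<in> Vset T b)"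

lemma R0_space_iff_Vset_eq:
  "R0_space T \<longleftrightarrow> (\<forall>a\<in>topspace T. \<forall>b\<in>Vset T a. Vset T b = Vset T a)"
  unfolding R0_space_def by (metis Vset_subset_Vset mem_Vset_self subset_antisym)

lemma partition_on_Vset_iff:
  "partition_on (topspace T) (Vset T ` topspace T) \<longleftrightarrow> R0_space T"
proof
  assume P: "partition_on (topspace T) (Vset T ` topspace T)"
  have "Vset T b = Vset T a" if a: "a \<in> topspace T" and b: "b \<in> Vset T a" for a b
  proof -
    have "b \<in> topspace T"
      using Vset_subset_topspace[OF a] b by blast
    then have "b \<in> Vset T b \<inter> Vset T a"
      using mem_Vset_self[of b T] b by blast
    then show ?thesis
      using partition_onD2[OF P] a \<open>b \<in> topspace T\<close> by (auto dest: disjointD)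
  qed
  then show "R0_space T"
    by (simp add: R0_space_iff_Vset_eq)
next
  assume "R0_space T"
  then have eq: "Vset T b = Vset T a" if "a \<in> topspace T" "b \<in> Vset T a" for a b
    using that by (simp add: R0_space_iff_Vset_eq)
  show "partition_on (topspace T) (Vset T ` topspace T)"
  proof (rule partition_onI)
    show "\<Union>(Vset T ` topspace T) = topspace T"
      using Vset_subset_topspace mem_Vset_self by fast
    show "{} \<notin> Vset T ` topspace T"
      using mem_Vset_self by fast
    fix p q assume "p \<in> Vset T ` topspace T" "q \<in> Vset T ` topspace T" "p \<noteq> q"
    then obtain a b where ab: "a \<in> topspace T" "b \<in> topspace T" "p = Vset T a" "q = Vset T b"
      by blast
    show "disjnt p q"
    proof (rule ccontr)
      assume "\<not> disjnt p q"
      then obtain c where "c \<in> Vset T a" "c \<in> Vset T b"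
        using ab by (auto simp: disjnt_iff)
      then have "Vset T a = Vset T b"
        using eq ab by metis
      then show False
        using ab \<open>p \<noteq> q\<close> by blast
    qed
  qed
qed

lemma equiv_Vset_subset_iff:
  "equiv (topspace T) {(a, b). a \<in> topspace T \<and> b \<in> topspace T \<and> Vset T b \<subseteq> Vset T a}
    \<longleftrightarrow> R0_space T"
  (is "equiv ?X ?R \<longleftrightarrow> _")
proof -
  have "refl_on ?X ?R" "trans ?R"
    by (auto simp: refl_on_def trans_def)
  moreover have "sym ?R \<longleftrightarrow> R0_space T"
    unfolding sym_def R0_space_def
    using Vset_subset_topspace mem_Vset_iff_Vset_subset by (smt (verit) case_prod_conv mem_Collect_eq subsetD)
  ultimately show ?thesis
    by (auto simp: equiv_def)
qed

lemma openin_quotient_topology: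
  "openin (quotient_topology T R) S \<longleftrightarrow>
     S \<subseteq> topspace T // R \<and> openin T {x \<in> topspace T. R `` {x} \<in> S}"
proof -
  define Q where "Q = (\<lambda>S. S \<subseteq> topspace T // R \<and> openin T {x \<in> topspace T. R `` {x} \<in> S})"
  have "istopology Q"
    unfolding istopology_def
  proof (intro conjI allI impI ballI)
    fix S S' assume "Q S" "Q S'"
    moreover have "{x \<in> topspace T. R `` {x} \<in> S \<inter> S'} =
        {x \<in> topspace T. R `` {x} \<in> S} \<inter> {x \<in> topspace T. R `` {x} \<in> S'}"
      by auto
    ultimately show "Q (S \<inter> S')"
      unfolding Q_def by (auto intro: openin_Int)
  next
    fix K assume K: "\<forall>S\<in>K. Q S"
    have "{x \<in> topspace T. R `` {x} \<in> \<Union>K} = (\<Union>S\<in>K. {x \<in> topspace T. R `` {x} \<in> S})"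
      by auto
    moreover have "openin T (\<Union>S\<in>K. {x \<in> topspace T. R `` {x} \<in> S})"
      using K unfolding Q_def by (intro openin_Union) auto
    ultimately show "Q (\<Union>K)"
      using K unfolding Q_def by auto
  qed
  then have "openin (quotient_topology T R) = Q"
    unfolding quotient_topology_def Q_def[symmetric] by simp
  then show ?thesis
    by (simp add: Q_def)
qed

lemma quotient_topology_eq_discrete_topology_iff:
  assumes R: "equiv (topspace T) R"
  shows "quotient_topology T R = discrete_topology (topspace T // R) \<longleftrightarrow>
           (\<forall>x\<in>topspace T. openin T (R `` {x}))"
proof -
  have preimage_eq_Union: "{x \<in> topspace T. R `` {x} \<in> S} = \<Union>S" if S: "S \<subseteq> topspace T // R" for S
  proof
    show "{x \<in> topspace T. R `` {x} \<in> S} \<subseteq> \<Union>S"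
      using equiv_class_self[OF R] by blast
    show "\<Union>S \<subseteq> {x \<in> topspace T. R `` {x} \<in> S}"
    proof
      fix y assume "y \<in> \<Union>S"
      then obtain C where "C \<in> S" "y \<in> C"
        by blast
      moreover obtain x where "x \<in> topspace T" "C = R `` {x}"
        using \<open>C \<in> S\<close> S by (blast elim: quotientE)
      ultimately show "y \<in> {x \<in> topspace T. R `` {x} \<in> S}"
        using R equiv_class_eq[OF R] by (auto simp: equiv_def)
    qed
  qed
  have "quotient_topology T R = discrete_topology (topspace T // R) \<longleftrightarrow>
          (\<forall>S. S \<subseteq> topspace T // R \<longrightarrow> openin T {x \<in> topspace T. R `` {x} \<in> S})"
    by (auto simp: topology_eq openin_quotient_topology)
  also have "\<dots> \<longleftrightarrow> (\<forall>S. S \<subseteq> topspace T // R \<longrightarrow> openin T (\<Union>S))"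
    by (simp add: preimage_eq_Union)
  also have "\<dots> \<longleftrightarrow> (\<forall>x\<in>topspace T. openin T (R `` {x}))"
  proof
    assume "\<forall>S. S \<subseteq> topspace T // R \<longrightarrow> openin T (\<Union>S)"
    then show "\<forall>x\<in>topspace T. openin T (R `` {x})"
      by (metis cSup_singleton empty_subsetI insert_subset quotientI)
  next
    assume "\<forall>x\<in>topspace T. openin T (R `` {x})"
    then show "\<forall>S. S \<subseteq> topspace T // R \<longrightarrow> openin T (\<Union>S)"
      by (auto intro!: openin_Union elim!: quotientE)
  qed
  finally show ?thesis .
qed

lemma openin_Vset_classes_iff:
  "(\<forall>a\<in>topspace T. openin T {b \<in> topspace T. Vset T b = Vset T a})
     \<longleftrightarrow> alexandroff T \<and> R0_space T"
proof -
  have class_subset: "{b \<in> topspace T. Vset T b = Vset T a} \<subseteq> Vset T a" for a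
    using mem_Vset_self by fastforce
  show ?thesis
  proof
    assume open_classes: "\<forall>a\<in>topspace T. openin T {b \<in> topspace T. Vset T b = Vset T a}"
    have class_eq: "{b \<in> topspace T. Vset T b = Vset T a} = Vset T a" if "a \<in> topspace T" for a
      using class_subset Vset_subset_openin[OF open_classes[rule_format, OF that]] that by blast
    have "alexandroff T"
      unfolding alexandroff_def using open_classes class_eq by simp
    moreover have "R0_space T"
      unfolding R0_space_iff_Vset_eq using class_eq by blast
    ultimately show "alexandroff T \<and> R0_space T" ..
  next
    assume "alexandroff T \<and> R0_space T"
    then have "{b \<in> topspace T. Vset T b = Vset T a} = Vset T a" if "a \<in> topspace T" for a
      using class_subset Vset_subset_topspace[OF that] that
      by (auto simp: R0_space_iff_Vset_eq)
    then show "\<forall>a\<in>topspace T. openin T {b \<in> topspace T. Vset T b = Vset T a}"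
      using \<open>alexandroff T \<and> R0_space T\<close> by (simp add: alexandroff_def)
  qed
qed

lemma uniform_structureD:
  assumes "uniform_structure X F" "\<alpha> \<in> F"
  shows "\<alpha> \<subseteq> X \<times> X" "Id_on X \<subseteq> \<alpha>" "converse \<alpha> \<in> F" "\<exists>\<beta>\<in>F. \<beta> O \<beta> \<subseteq> \<alpha>"
  using assms unfolding uniform_structure_def by auto

lemma uniform_interior_in_uniform_opens:
  assumes F: "uniform_structure X F"
  shows "{y \<in> X. \<exists>\<delta>\<in>F. \<delta> `` {y} \<subseteq> S} \<in> uniform_opens X F"
    (is "?W \<in> _")
  unfolding uniform_opens_def
proof (intro CollectI conjI ballI)
  show "?W \<subseteq> X"
    by blast
  fix y assume "y \<in> ?W"
  then obtain \<delta> where \<delta>: "\<delta> \<in> F" "\<delta> `` {y} \<subseteq> S"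
    by blast
  obtain \<beta> where \<beta>: "\<beta> \<in> F" "\<beta> O \<beta> \<subseteq> \<delta>"
    using uniform_structureD(4)[OF F \<delta>(1)] by blast
  have "\<beta> `` {y} \<subseteq> ?W"
  proof
    fix z assume z: "z \<in> \<beta> `` {y}"
    then have "z \<in> X"
      using uniform_structureD(1)[OF F \<beta>(1)] by blast
    moreover have "\<beta> `` {z} \<subseteq> S"
      using z \<beta>(2) \<delta>(2) by blast
    ultimately show "z \<in> ?W"
      using \<beta>(1) by blast
  qed
  then show "\<exists>\<alpha>\<in>F. \<alpha> `` {y} \<subseteq> ?W"
    using \<beta>(1) by blast
qed

lemma uniform_structure_supersets_of_equiv:
  assumes E: "equiv X E"
  shows "uniform_structure X {\<alpha>. \<alpha> \<subseteq> X \<times> X \<and> E \<subseteq> \<alpha>}"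
    (is "uniform_structure X ?F")
proof -
  have E_in_F: "E \<in> ?F"
    using equiv_type[OF E] by blast
  have "Id_on X \<subseteq> E" "converse E = E" "E O E \<subseteq> E"
    using E trans_O_subset by (auto simp: equiv_def refl_on_def sym_conv_converse_eq)
  then show ?thesis
    unfolding uniform_structure_def
  proof (intro conjI ballI allI impI)
    show "?F \<noteq> {}" "?F \<subseteq> Pow (X \<times> X)"
      using E_in_F by blast+
    fix \<alpha> assume \<alpha>: "\<alpha> \<in> ?F"
    then show "Id_on X \<subseteq> \<alpha>"
      using \<open>Id_on X \<subseteq> E\<close> by blast
    show "converse \<alpha> \<in> ?F"
      using \<alpha> converse_mono[of E \<alpha>] \<open>converse E = E\<close> by auto
    show "\<exists>\<beta>\<in>?F. \<beta> O \<beta> \<subseteq> \<alpha>"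
      using \<alpha> \<open>E O E \<subseteq> E\<close> by (intro bexI[OF _ E_in_F]) auto
    fix \<beta>
    show "\<alpha> \<subseteq> \<beta> \<and> \<beta> \<subseteq> X \<times> X \<Longrightarrow> \<beta> \<in> ?F" "\<beta> \<in> ?F \<Longrightarrow> \<alpha> \<inter> \<beta> \<in> ?F"
      using \<alpha> by blast+
  qed
qed

lemma R0_space_if_uniformizable:
  assumes "uniformizable T"
  shows "R0_space T"
  unfolding R0_space_def
proof (intro ballI mem_VsetI)
  obtain F where F: "uniform_structure (topspace T) F" and C: "compatible_uniformity T F"
    using assms unfolding uniformizable_def by blast
  fix a b U assume a: "a \<in> topspace T" and b: "b \<in> Vset T a" and "openin T U" "b \<in> U"
  then obtain \<alpha> where "\<alpha> \<in> F" and \<alpha>: "\<alpha> `` {b} \<subseteq> U"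
    using C unfolding compatible_uniformity_def uniform_opens_def by blast
  \<comment> \<open>the uniform interior of \<open>\<alpha>\<inverse>[a]\<close>: an open set containing \<open>a\<close>, hence \<open>b\<close>\<close>
  define W where "W = {y \<in> topspace T. \<exists>\<delta>\<in>F. \<delta> `` {y} \<subseteq> converse \<alpha> `` {a}}"
  have "openin T W"
    using uniform_interior_in_uniform_opens[OF F] C
    unfolding W_def compatible_uniformity_def by blast
  moreover have "a \<in> W"
    using a uniform_structureD(3)[OF F \<open>\<alpha> \<in> F\<close>] unfolding W_def by blast
  ultimately have "b \<in> W"
    using b Vset_subset_openin[of T W a] by blast
  then obtain \<delta> where "\<delta> \<in> F" "\<delta> `` {b} \<subseteq> converse \<alpha> `` {a}" "b \<in> topspace T"
    unfolding W_def by blast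
  moreover have "(b, b) \<in> \<delta>"
    using uniform_structureD(2)[OF F \<open>\<delta> \<in> F\<close>] \<open>b \<in> topspace T\<close> by blast
  ultimately have "(b, a) \<in> \<alpha>"
    by blast
  then show "a \<in> U"
    using \<alpha> by blast
qed

lemma uniform_structure_partition_uniformity:
  assumes "partition_on X P"
  shows "uniform_structure X (partition_uniformity X P)"
proof -
  have "(\<Union>D\<in>P. D \<times> D) = {(x, y). \<exists>D\<in>P. x \<in> D \<and> y \<in> D}"
    by blast
  then show ?thesis
    unfolding partition_uniformity_def
    using uniform_structure_supersets_of_equiv[OF equiv_partition_on[OF assms]] by simp
qed

definition saturated :: "'a set set \<Rightarrow> 'a set \<Rightarrow> bool" where
  "saturated P U \<longleftrightarrow> (\<forall>x\<in>U. \<forall>D\<in>P. x \<in> D \<longrightarrow> D \<subseteq> U)"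

lemma uniform_opens_partition_uniformity:
  assumes "\<Union>P \<subseteq> X"
  shows "uniform_opens X (partition_uniformity X P) = {U. U \<subseteq> X \<and> saturated P U}"
proof -
  define E where "E = (\<Union>D\<in>P. D \<times> D)"
  have E_in_F: "E \<in> partition_uniformity X P"
    using assms unfolding partition_uniformity_def E_def by blast
  have E_image: "E `` {x} = \<Union>{D \<in> P. x \<in> D}" for x
    unfolding E_def by auto
  have "(\<exists>\<alpha>\<in>partition_uniformity X P. \<alpha> `` {x} \<subseteq> U) \<longleftrightarrow> (\<forall>D\<in>P. x \<in> D \<longrightarrow> D \<subseteq> U)" for x U
  proof
    assume "\<exists>\<alpha>\<in>partition_uniformity X P. \<alpha> `` {x} \<subseteq> U"
    then obtain \<alpha> where "E \<subseteq> \<alpha>" "\<alpha> `` {x} \<subseteq> U"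
      unfolding partition_uniformity_def E_def by auto
    then have "E `` {x} \<subseteq> U"
      using Image_mono[of E \<alpha> "{x}" "{x}"] by auto
    then show "\<forall>D\<in>P. x \<in> D \<longrightarrow> D \<subseteq> U"
      unfolding E_image by auto
  next
    assume "\<forall>D\<in>P. x \<in> D \<longrightarrow> D \<subseteq> U"
    then have "E `` {x} \<subseteq> U"
      unfolding E_image by auto
    then show "\<exists>\<alpha>\<in>partition_uniformity X P. \<alpha> `` {x} \<subseteq> U"
      using E_in_F by auto
  qed
  then show ?thesis
    unfolding uniform_opens_def saturated_def by simp
qed

lemma partition_blocks_eq_Vset:
  assumes P: "partition_on (topspace T) P"
    and opens: "\<forall>U. openin T U \<longleftrightarrow> U \<subseteq> topspace T \<and> saturated P U"
  shows "\<forall>D\<in>P. openin T D \<and> (\<forall>a\<in>D. Vset T a = D)"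
proof (intro ballI conjI)
  fix D assume D: "D \<in> P"
  have "saturated P D"
    using D partition_onD2[OF P] unfolding saturated_def by (auto dest: disjointD)
  then show "openin T D"
    using opens partition_onD1[OF P] D by blast
  fix a assume a: "a \<in> D"
  have "D \<subseteq> Vset T a"
  proof
    fix x assume "x \<in> D"
    show "x \<in> Vset T a"
    proof (rule mem_VsetI)
      fix U assume "openin T U" "a \<in> U"
      then have "D \<subseteq> U"
        using opens D a by (simp add: saturated_def)
      then show "x \<in> U"
        using \<open>x \<in> D\<close> by blast
    qed
  qed
  then show "Vset T a = D"
    using Vset_subset_openin[OF \<open>openin T D\<close> a] by blast
qed

lemma openin_iff_saturated:
  assumes P: "partition_on (topspace T) P"
    and blocks: "\<forall>D\<in>P. openin T D \<and> (\<forall>a\<in>D. Vset T a = D)"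
  shows "\<forall>U. openin T U \<longleftrightarrow> U \<subseteq> topspace T \<and> saturated P U"
proof (intro allI iffI)
  fix U assume "openin T U"
  then show "U \<subseteq> topspace T \<and> saturated P U"
    using blocks openin_subset Vset_subset_openin[OF \<open>openin T U\<close>]
    unfolding saturated_def by metis
next
  fix U assume U: "U \<subseteq> topspace T \<and> saturated P U"
  have "U = \<Union>{D \<in> P. D \<subseteq> U}"
  proof
    show "U \<subseteq> \<Union>{D \<in> P. D \<subseteq> U}"
    proof
      fix x assume "x \<in> U"
      then have "x \<in> \<Union>P"
        using U partition_onD1[OF P] by blast
      then obtain D where "D \<in> P" "x \<in> D"
        by blast
      moreover have "D \<subseteq> U"
        using calculation \<open>x \<in> U\<close> U by (simp add: saturated_def)
      ultimately show "x \<in> \<Union>{D \<in> P. D \<subseteq> U}"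
        by blast
    qed
  qed blast
  then show "openin T U"
    using blocks by (metis (no_types, lifting) mem_Collect_eq openin_Union)
qed

lemma compatible_partition_uniformity_iff:
  assumes P: "partition_on (topspace T) P"
  shows "compatible_uniformity T (partition_uniformity (topspace T) P) \<longleftrightarrow>
           (\<forall>D\<in>P. openin T D \<and> (\<forall>a\<in>D. Vset T a = D))"
proof -
  have "uniform_opens (topspace T) (partition_uniformity (topspace T) P) =
          {U. U \<subseteq> topspace T \<and> saturated P U}"
    by (rule uniform_opens_partition_uniformity) (simp add: partition_onD1[OF P])
  then have "compatible_uniformity T (partition_uniformity (topspace T) P) \<longleftrightarrow>
               (\<forall>U. openin T U \<longleftrightarrow> U \<subseteq> topspace T \<and> saturated P U)"
    by (auto simp: compatible_uniformity_def set_eq_iff)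
  also have "\<dots> \<longleftrightarrow> (\<forall>D\<in>P. openin T D \<and> (\<forall>a\<in>D. Vset T a = D))"
    using partition_blocks_eq_Vset[OF P] openin_iff_saturated[OF P] by (rule iffI)
  finally show ?thesis .
qed

lemma ex_compatible_partition_uniformity_iff:
  "(\<exists>P. partition_on (topspace T) P
        \<and> uniform_structure (topspace T) (partition_uniformity (topspace T) P)
        \<and> compatible_uniformity T (partition_uniformity (topspace T) P))
     \<longleftrightarrow> alexandroff T \<and> R0_space T"
proof
  assume "\<exists>P. partition_on (topspace T) P
        \<and> uniform_structure (topspace T) (partition_uniformity (topspace T) P)
        \<and> compatible_uniformity T (partition_uniformity (topspace T) P)"
  then obtain P where P: "partition_on (topspace T) P"
    and "compatible_uniformity T (partition_uniformity (topspace T) P)"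
    by blast
  then have blocks: "\<forall>D\<in>P. openin T D \<and> (\<forall>a\<in>D. Vset T a = D)"
    by (simp add: compatible_partition_uniformity_iff)
  have "openin T (Vset T a) \<and> (\<forall>b\<in>Vset T a. Vset T b = Vset T a)" if "a \<in> topspace T" for a
  proof -
    have "a \<in> \<Union>P"
      using partition_onD1[OF P] that by simp
    then obtain D where "D \<in> P" "a \<in> D"
      by blast
    then have "Vset T a = D" "openin T D" "\<forall>b\<in>D. Vset T b = D"
      using blocks by auto
    then show ?thesis
      by simp
  qed
  then show "alexandroff T \<and> R0_space T"
    by (simp add: alexandroff_def R0_space_iff_Vset_eq)
next
  assume "alexandroff T \<and> R0_space T"
  then have blocks: "\<forall>D\<in>Vset T ` topspace T. openin T D \<and> (\<forall>a\<in>D. Vset T a = D)"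
    by (auto simp: alexandroff_def R0_space_iff_Vset_eq)
  have P: "partition_on (topspace T) (Vset T ` topspace T)"
    using \<open>alexandroff T \<and> R0_space T\<close> by (simp add: partition_on_Vset_iff)
  show "\<exists>P. partition_on (topspace T) P
        \<and> uniform_structure (topspace T) (partition_uniformity (topspace T) P)
        \<and> compatible_uniformity T (partition_uniformity (topspace T) P)"
  proof (intro exI conjI)
    show "uniform_structure (topspace T) (partition_uniformity (topspace T) (Vset T ` topspace T))"
      using P by (rule uniform_structure_partition_uniformity)
    show "compatible_uniformity T (partition_uniformity (topspace T) (Vset T ` topspace T))"
      using blocks by (simp add: compatible_partition_uniformity_iff[OF P])
  qed (rule P)
qed

lemma alexandroff_uniformizable_iff:
  "alexandroff T \<and> uniformizable T \<longleftrightarrow> alexandroff T \<and> R0_space T"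
  using R0_space_if_uniformizable ex_compatible_partition_uniformity_iff[of T]
  unfolding uniformizable_def by blast

lemma discrete_quotient_Vset_iff:
  "quotient_topology T {(a, b). a \<in> topspace T \<and> b \<in> topspace T \<and> Vset T b = Vset T a}
     = discrete_topology (topspace T // {(a, b). a \<in> topspace T \<and> b \<in> topspace T \<and> Vset T b = Vset T a})
   \<longleftrightarrow> alexandroff T \<and> R0_space T"
  (is "quotient_topology T ?R = _ \<longleftrightarrow> _")
proof -
  have "equiv (topspace T) ?R"
    by (auto intro!: equivI simp: refl_on_def sym_def trans_def)
  moreover have "?R `` {a} = {b \<in> topspace T. Vset T b = Vset T a}" if "a \<in> topspace T" for a
    using that by auto
  ultimately show ?thesis
    using quotient_topology_eq_discrete_topology_iff[of T ?R] openin_Vset_classes_iff[of T]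
    by simp
qed

theorem mainTheorem4:
  fixes T :: "'a topology"
  defines "X \<equiv> topspace T"
  shows
   "((alexandroff T \<and> uniformizable T)
      \<longleftrightarrow> (partition_on X (Vset T ` X) \<and> (\<forall>a\<in>X. openin T (Vset T a))))
    \<and> ((alexandroff T \<and> uniformizable T)
      \<longleftrightarrow> (\<exists>P. partition_on X P \<and> uniform_structure X (partition_uniformity X P)
              \<and> compatible_uniformity T (partition_uniformity X P)))
    \<and> ((alexandroff T \<and> uniformizable T)
      \<longleftrightarrow> (alexandroff T \<and> (\<forall>a\<in>X. \<forall>b\<in>Vset T a. Vset T b = Vset T a)))
    \<and> ((alexandroff T \<and> uniformizable T)
      \<longleftrightarrow> (alexandroff T \<and> equiv X {(a, b). a \<in> X \<and> b \<in> X \<and> Vset T b \<subseteq> Vset T a}))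
    \<and> ((alexandroff T \<and> uniformizable T)
      \<longleftrightarrow> quotient_topology T {(a, b). a \<in> X \<and> b \<in> X \<and> Vset T b = Vset T a}
          = discrete_topology (X // {(a, b). a \<in> X \<and> b \<in> X \<and> Vset T b = Vset T a}))"
proof -
  have Vset_open_partition_iff:
    "partition_on X (Vset T ` X) \<and> (\<forall>a\<in>X. openin T (Vset T a)) \<longleftrightarrow> alexandroff T \<and> R0_space T"
    unfolding X_def alexandroff_def partition_on_Vset_iff by (rule conj_commute)
  show ?thesis
    unfolding X_def Vset_open_partition_iff[unfolded X_def] alexandroff_uniformizable_iff
      ex_compatible_partition_uniformity_iff equiv_Vset_subset_iff discrete_quotient_Vset_iff
      R0_space_iff_Vset_eq[symmetric]
    by simp
qed

end
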